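(* Let $\gamma>0$. There exist $C,D>0$ such that for all $x\in\mathbb{R}^d$, $$\mathbb{E}\big(T(B_\gamma,x+B_\gamma)\big)\le C\|x\|+D.$$ Moreover there exist $a,b,c>0$ such that for all $r>0$, $$\mathbb{P}\big(T(B_\gamma,B_r)\ge ar\big)\le b\exp(-cr).$$
   Context: $\mu$ is a probability measure on $(0,+\infty)$, $B_r$ the closed Euclidean ball of radius $r$ at $0$. Let $\chi$ be a Poisson point process on $\mathbb{R}^d\times[0,+\infty)\times(0,+\infty)$ with intensity the product of Lebesgue measure on $\mathbb{R}^d\times[0,+\infty)$ and $\mu$. Passage times: $\tau(x,x)=0$; for each $(c,t,r)\in\chi$ and $y\in(c+B_r)\setminus\{c\}$, $\tau(c,y)=t$; otherwise $\tau(x,y)=+\infty$. A path from $a$ to $b$ is a finite sequence $(a=x_0,\dots,x_k=b)$ of distinct points; $T(\pi)=\sum_{i=0}^{k-1}\tau(x_i,x_{i+1})$. For $A\subset\mathbb{R}^d$, $x\in\mathbb{R}^d$: $T(A,x)=\inf\{T(\pi):\pi\text{ a path from some }a\in A\text{ to }x\}$, and for $C\subset\mathbb{R}^d$, $T(A,C)=\sup_{c\in C}T(A,c)$. *)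

theory Defs
  imports "HOL-Probability.Probability"
begin

text \<open>Poisson point process on a measure space N (the intensity measure), realised as a
random set of points chi on the probability space M.\<close>

definition poisson_point_process :: "'w measure \<Rightarrow> 'p measure \<Rightarrow> ('w \<Rightarrow> 'p set) \<Rightarrow> bool" where
  "poisson_point_process M N chi \<longleftrightarrow>
     prob_space M \<and>
     (\<forall>A \<in> sets N. emeasure N A < \<infinity> \<longrightarrow>
        (AE \<omega> in M. finite (chi \<omega> \<inter> A)) \<and>
        (\<lambda>\<omega>. card (chi \<omega> \<inter> A)) \<in> measurable M (count_space UNIV) \<and>
        (\<forall>k::nat. measure M {\<omega> \<in> space M. card (chi \<omega> \<inter> A) = k}
                   = measure N A ^ k / fact k * exp (- measure N A))) \<and>
     (\<forall>\<A>. \<A> \<subseteq> sets N \<and> (\<forall>A\<in>\<A>. emeasure N A < \<infinity>) \<and> disjoint \<A> \<longrightarrow>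
        prob_space.indep_vars M (\<lambda>_. count_space (UNIV :: nat set))
          (\<lambda>A \<omega>. card (chi \<omega> \<inter> A)) \<A>)"

definition fpp_intensity :: "real measure \<Rightarrow> ('a::euclidean_space \<times> real \<times> real) measure" where
  "fpp_intensity \<mu> = lborel \<Otimes>\<^sub>M (restrict_space lborel {0..} \<Otimes>\<^sub>M \<mu>)"

text \<open>Passage time tau(x,y) for a configuration X of points (c,t,r). If several points share
the centre x (a null event), the smallest time is taken.\<close>

definition tau :: "('a::euclidean_space \<times> real \<times> real) set \<Rightarrow> 'a \<Rightarrow> 'a \<Rightarrow> ennreal" where
  "tau X x y = (if x = y then 0
     else (INF t \<in> {t. \<exists>r. (x, t, r) \<in> X \<and> y \<in> cball x r}. ennreal t))"

definition path_time :: "('a::euclidean_space \<times> real \<times> real) set \<Rightarrow> 'a list \<Rightarrow> ennreal" where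
  "path_time X xs = (\<Sum>i < length xs - 1. tau X (xs ! i) (xs ! Suc i))"

definition T_pt :: "('a::euclidean_space \<times> real \<times> real) set \<Rightarrow> 'a set \<Rightarrow> 'a \<Rightarrow> ennreal" where
  "T_pt X A x = (INF xs \<in> {xs. xs \<noteq> [] \<and> distinct xs \<and> hd xs \<in> A \<and> last xs = x}. path_time X xs)"

definition T_set :: "('a::euclidean_space \<times> real \<times> real) set \<Rightarrow> 'a set \<Rightarrow> 'a set \<Rightarrow> ennreal" where
  "T_set X A C = (SUP c \<in> C. T_pt X A c)"

end

theory Submission
  imports Defs
begin

text \<open>Choose \<open>\<rho> \<le> \<gamma>\<close> and \<open>r0 \<ge> 4 * \<rho>\<close> such that radii \<open>\<ge> r0\<close> have positive \<open>\<mu>\<close>-mass. A point \<open>c\<close>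
near \<open>k\<close> is reached from \<open>cball 0 \<rho>\<close> along a chain of about \<open>norm k / (2 * \<rho>)\<close> points spaced at
most \<open>2 * \<rho>\<close> apart: if every chain point has a process point \<open>(p, t, R)\<close> within \<open>\<rho>\<close> with
\<open>R \<ge> r0\<close>, consecutive such points cover each other and the passage time is at most the sum of
their times. Chain points of equal parity see disjoint regions of the intensity, so the
probability that this sum exceeds \<open>K\<close> plus the chain length is at most \<open>exp (- \<theta> * K / 2)\<close> times
a factor exponential in the length, where \<open>\<theta>\<close> is the intensity of a cylinder of unit height over a
ball of radius \<open>\<rho>\<close>. A union bound over a finite \<open>\<rho>\<close>-net of \<open>cball 0 r\<close> with
\<open>K\<close> linear in \<open>r\<close> gives the exponential tail bound, and summing the tail over \<open>r = R, R + 1, \<dots>\<close>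
gives the affine bound on the expectation.\<close>

lemma path_time_singleton [simp]: "path_time X [x] = 0"
  by (simp add: path_time_def)

lemma path_time_Cons_Cons: "path_time X (x # y # zs) = tau X x y + path_time X (y # zs)"
  unfolding path_time_def by (simp add: sum.lessThan_Suc_shift del: sum.lessThan_Suc)

lemma path_time_append_Cons:
  "path_time X (xs @ y # ys) = path_time X (xs @ [y]) + path_time X (y # ys)"
proof (induction xs)
  case (Cons a xs)
  then show ?case by (cases xs) (auto simp: path_time_Cons_Cons add.assoc)
qed simp

lemma tau_le_time:
  assumes "(x, t, r) \<in> X" "y \<in> cball x r"
  shows "tau X x y \<le> ennreal t"
  unfolding tau_def using assms by (auto intro!: INF_lower)

text \<open>Paths in the definition of \<open>T_pt\<close> consist of distinct points, but cutting out a loop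
never increases the passage time, so every walk gives an upper bound.\<close>

lemma T_pt_le_path_time:
  assumes "xs \<noteq> []" "hd xs \<in> A" "last xs = x"
  shows "T_pt X A x \<le> path_time X xs"
  using assms
proof (induction "length xs" arbitrary: xs rule: less_induct)
  case less
  show ?case
  proof (cases "distinct xs")
    case True
    then show ?thesis unfolding T_pt_def using less.prems by (intro INF_lower) auto
  next
    case False
    then obtain as y bs cs where xs: "xs = as @ [y] @ bs @ [y] @ cs"
      using not_distinct_decomp by blast
    define ys where "ys = as @ y # cs"
    have "path_time X ys = path_time X (as @ [y]) + path_time X (y # cs)"
      unfolding ys_def by (rule path_time_append_Cons)
    also have "\<dots> \<le> path_time X (as @ [y]) + (path_time X (y # bs @ [y]) + path_time X (y # cs))"
      by (intro add_left_mono add_increasing) auto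
    also have "\<dots> = path_time X xs"
      unfolding xs using path_time_append_Cons[of X as y "bs @ y # cs"]
        path_time_append_Cons[of X "y # bs" y cs]
      by simp
    finally have le: "path_time X ys \<le> path_time X xs" .
    have "ys \<noteq> []" "length ys < length xs" "hd ys = hd xs" "last ys = last xs"
      unfolding ys_def xs by (cases as; cases cs; simp)+
    then have "T_pt X A x \<le> path_time X ys" using less by simp
    with le show ?thesis by simp
  qed
qed

lemma T_pt_le_sum_times:
  assumes pts: "\<And>i. i \<le> n \<Longrightarrow> (p i, t i, R i) \<in> X \<and> 0 \<le> t i"
    and steps: "\<And>i. i < n \<Longrightarrow> p (Suc i) \<in> cball (p i) (R i)"
    and last: "c \<in> cball (p n) (R n)" and first: "p 0 \<in> A"
  shows "T_pt X A c \<le> ennreal (\<Sum>i\<le>n. t i)"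
proof -
  define xs where "xs = map p [0..<Suc n] @ [c]"
  have len: "length xs - 1 = Suc n" unfolding xs_def by simp
  have "tau X (xs ! i) (xs ! Suc i) \<le> ennreal (t i)" if "i < Suc n" for i
  proof (cases "i < n")
    case True
    then show ?thesis unfolding xs_def
      using pts[of i] steps[of i] by (auto simp: nth_append simp del: upt_Suc intro!: tau_le_time)
  next
    case False
    with that have "i = n" by simp
    then show ?thesis unfolding xs_def
      using pts[of n] last by (auto simp: nth_append simp del: upt_Suc intro!: tau_le_time)
  qed
  then have "path_time X xs \<le> (\<Sum>i<Suc n. ennreal (t i))"
    unfolding path_time_def len by (intro sum_mono) auto
  also have "\<dots> = ennreal (\<Sum>i\<le>n. t i)"
    unfolding lessThan_Suc_atMost using pts by (intro sum_ennreal) auto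
  finally have "path_time X xs \<le> ennreal (\<Sum>i\<le>n. t i)" .
  moreover have "T_pt X A c \<le> path_time X xs"
    using first by (intro T_pt_le_path_time) (auto simp: xs_def hd_append upt_conv_Cons simp del: upt_Suc)
  ultimately show ?thesis by simp
qed

lemma T_set_antimono:
  assumes "A \<subseteq> A'" "C' \<subseteq> C"
  shows "T_set X A' C' \<le> T_set X A C"
  unfolding T_set_def T_pt_def using assms
  by (intro SUP_subset_mono INF_superset_mono) auto

lemma exists_threshold_emeasure_pos:
  fixes \<mu> :: "real measure"
  assumes "prob_space \<mu>" "sets \<mu> = sets borel" "emeasure \<mu> {..0} = 0"
  shows "\<exists>r0>0. emeasure \<mu> {r0..} > 0"
proof (rule ccontr)
  assume "\<not> ?thesis"
  then have "emeasure \<mu> {inverse (real (Suc n))..} = 0" for n by simp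
  then have "emeasure \<mu> (\<Union>n. {inverse (real (Suc n))..}) = 0"
    using assms(2) by (intro emeasure_UN_eq_0) auto
  moreover have "(\<Union>n. {inverse (real (Suc n))..}) = {0<..}"
  proof (intro set_eqI iffI)
    fix x :: real assume "x \<in> {0<..}"
    then obtain n where "inverse (real (Suc n)) < x" using reals_Archimedean[of x] by auto
    then show "x \<in> (\<Union>n. {inverse (real (Suc n))..})" by (auto intro: less_imp_le)
  next
    fix x assume "x \<in> (\<Union>n. {inverse (real (Suc n))..})"
    then obtain n where "inverse (real (Suc n)) \<le> x" by auto
    moreover have "0 < inverse (real (Suc n))" by simp
    ultimately have "0 < x" by (rule order_less_le_trans[rotated])
    then show "x \<in> {0<..}" by simp
  qed
  moreover have "space \<mu> = {..0} \<union> {0<..}" using sets_eq_imp_space_eq[OF assms(2)] by auto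
  then have "emeasure \<mu> {..0} + emeasure \<mu> {0<..} = emeasure \<mu> (space \<mu>)"
    using assms(2) by (subst plus_emeasure) auto
  ultimately show False using assms(3) prob_space.emeasure_space_1[OF assms(1)] by simp
qed

lemma affine_less_linear:
  fixes A B r :: real
  assumes "1 \<le> r"
  shows "A * r + B < (\<bar>A\<bar> + \<bar>B\<bar> + 1) * r"
proof -
  have "A * r \<le> \<bar>A\<bar> * r" using assms by (intro mult_right_mono) auto
  moreover have "B \<le> \<bar>B\<bar> * r" using assms mult_left_mono[of 1 r "\<bar>B\<bar>"] by simp
  ultimately show ?thesis using assms by (simp only: distrib_right mult_1_left)
qed

lemma sum_PiE_prod_power_le:
  fixes q :: real
  assumes "0 \<le> q" "q < 1" "finite I"
  shows "(\<Sum>l\<in>I \<rightarrow>\<^sub>E {0..K}. \<Prod>i\<in>I. q ^ l i) \<le> (1 / (1 - q)) ^ card I"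
proof -
  have "(\<Sum>j\<in>{0..K}. q ^ j) = (1 - q ^ Suc K) / (1 - q)"
    using assms unfolding atLeast0AtMost lessThan_Suc_atMost[symmetric] by (simp add: sum_gp_strict del: sum.lessThan_Suc)
  also have "\<dots> \<le> 1 / (1 - q)" using assms by (intro divide_right_mono) auto
  finally have "(\<Sum>j\<in>{0..K}. q ^ j) \<le> 1 / (1 - q)" .
  then have "(\<Prod>i\<in>I. \<Sum>j\<in>{0..K}. q ^ j) \<le> (\<Prod>i\<in>I. 1 / (1 - q))"
    using assms by (intro prod_mono) (auto intro: sum_nonneg)
  also have "\<dots> = (1 / (1 - q)) ^ card I" by simp
  finally show ?thesis using prod_sum_PiE[OF assms(3), of "\<lambda>_. {0..K}" "\<lambda>_ j. q ^ j"] by simp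
qed

lemma le_indicator_suminf_if_tail:
  fixes f :: "real \<Rightarrow> ennreal"
  assumes "mono f" "a > 0" "R \<ge> 0"
    and tail: "\<And>k. x \<notin> E k \<Longrightarrow> f (R + real k) < ennreal (a * (R + real k))"
  shows "f R \<le> ennreal (a * R) + (\<Sum>k. ennreal a * indicator (E k) x)"
proof (cases "\<exists>k. x \<notin> E k")
  case True
  define K0 where "K0 = (LEAST k. x \<notin> E k)"
  have "x \<notin> E K0" unfolding K0_def using True by (rule LeastI_ex)
  have "x \<in> E k" if "k < K0" for k using not_less_Least[OF that[unfolded K0_def]] by blast
  then have "(\<Sum>k<K0. ennreal a * indicator (E k) x) = ennreal (a * real K0)"
    using assms(2) by (simp add: ennreal_of_nat_eq_real_of_nat ennreal_mult' mult.commute)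
  have "f R \<le> f (R + real K0)" using \<open>mono f\<close> by (simp add: monoD)
  also have "\<dots> < ennreal (a * (R + real K0))" using tail[OF \<open>x \<notin> E K0\<close>] .
  also have "\<dots> = ennreal (a * R) + (\<Sum>k<K0. ennreal a * indicator (E k) x)"
    using \<open>(\<Sum>k<K0. ennreal a * indicator (E k) x) = ennreal (a * real K0)\<close> assms(2,3)
    by (simp add: distrib_left ennreal_plus)
  also have "\<dots> \<le> ennreal (a * R) + (\<Sum>k. ennreal a * indicator (E k) x)"
    by (intro add_left_mono sum_le_suminf) auto
  finally show ?thesis by simp
next
  case False
  then have "(\<lambda>k. ennreal a * indicator (E k) x) = (\<lambda>_. ennreal a)" by auto
  moreover have "(\<Sum>k. ennreal a) = top"
    using assms(2) by (intro summable_iff_suminf_neq_top) (auto simp: summable_const_iff)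
  ultimately have "(\<Sum>k. ennreal a * indicator (E k) x) = top" by simp
  then show ?thesis by simp
qed

lemma nn_integral_suminf_indicator_le:
  assumes "prob_space M" "\<And>k. E k \<in> sets M" "\<And>k. measure M (E k) \<le> b * q ^ k"
    "a \<ge> 0" "b \<ge> 0" "0 \<le> q" "q < 1"
  shows "(\<integral>\<^sup>+\<omega>. (\<Sum>k. ennreal a * indicator (E k) \<omega>) \<partial>M) \<le> ennreal (a * b / (1 - q))"
proof -
  interpret prob_space M by fact
  have "ennreal a * emeasure M (E k) \<le> ennreal a * ennreal (b * q ^ k)" for k
    using assms(3)[of k] by (intro mult_left_mono) (auto simp: emeasure_eq_measure ennreal_leI)
  also have "ennreal a * ennreal (b * q ^ k) = ennreal (a * b * q ^ k)" for k
    using assms by (simp add: ennreal_mult[symmetric] mult.assoc)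
  finally have "(\<Sum>k. ennreal a * emeasure M (E k)) \<le> (\<Sum>k. ennreal (a * b * q ^ k))"
    by (intro suminf_le) auto
  also have "(\<Sum>k. ennreal (a * b * q ^ k)) = ennreal (a * b / (1 - q))"
    using assms by (subst suminf_ennreal2)
      (auto simp: suminf_mult suminf_geometric summable_geometric divide_inverse intro!: summable_mult)
  finally show ?thesis
    using assms(2) by (subst nn_integral_suminf) (auto simp: nn_integral_cmult_indicator)
qed

lemma nn_integral_bound_of_exponential_tail:
  fixes f :: "'w \<Rightarrow> real \<Rightarrow> ennreal"
  assumes "prob_space M" "a > 0" "b > 0" "c > 0" "R > 0"
    and mono: "\<And>\<omega>. mono (f \<omega>)"
    and tail: "\<And>r. r > 0 \<Longrightarrow> \<exists>E\<in>sets M.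
                 {\<omega>\<in>space M. ennreal (a * r) \<le> f \<omega> r} \<subseteq> E \<and> measure M E \<le> b * exp (- c * r)"
  shows "\<exists>g\<in>borel_measurable M. (\<forall>\<omega>\<in>space M. f \<omega> R \<le> g \<omega>) \<and>
           (\<integral>\<^sup>+\<omega>. g \<omega> \<partial>M) \<le> ennreal (a * R + a * b / (1 - exp (- c)))"
proof -
  interpret prob_space M by fact
  have "\<forall>k. \<exists>E\<in>sets M. {\<omega>\<in>space M. ennreal (a * (R + real k)) \<le> f \<omega> (R + real k)} \<subseteq> E \<and>
          measure M E \<le> b * exp (- c * (R + real k))"
    using \<open>R > 0\<close> by (intro allI tail) (simp add: add_pos_nonneg)
  then obtain E where E: "\<And>k. E k \<in> sets M"
    "\<And>k. {\<omega>\<in>space M. ennreal (a * (R + real k)) \<le> f \<omega> (R + real k)} \<subseteq> E k"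
    "\<And>k. measure M (E k) \<le> b * exp (- c * (R + real k))"
    by metis
  have E_geom: "measure M (E k) \<le> b * exp (- c) ^ k" for k
  proof -
    have "exp (- c * (R + real k)) = exp (- c * R) * exp (- c) ^ k"
      by (simp add: exp_of_nat_mult[symmetric] exp_add[symmetric] algebra_simps)
    then have "measure M (E k) \<le> b * (exp (- c * R) * exp (- c) ^ k)" using E(3)[of k] by simp
    also have "\<dots> \<le> b * exp (- c) ^ k" using assms by (intro mult_left_mono mult_left_le_one_le) auto
    finally show ?thesis .
  qed
  define g where "g \<omega> = ennreal (a * R) + (\<Sum>k. ennreal a * indicator (E k) \<omega>)" for \<omega>
  have "g \<in> borel_measurable M" unfolding g_def using E(1) by measurable
  moreover have "f \<omega> R \<le> g \<omega>" if "\<omega> \<in> space M" for \<omega>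
  proof -
    have "f \<omega> (R + real k) < ennreal (a * (R + real k))" if "\<omega> \<notin> E k" for k
      using E(2)[of k] that \<open>\<omega> \<in> space M\<close> by (auto simp: not_le)
    then show ?thesis
      unfolding g_def using assms by (intro le_indicator_suminf_if_tail) auto
  qed
  moreover have "(\<integral>\<^sup>+\<omega>. g \<omega> \<partial>M) \<le> ennreal (a * R + a * b / (1 - exp (- c)))"
  proof -
    have "(\<integral>\<^sup>+\<omega>. g \<omega> \<partial>M) = ennreal (a * R) + (\<integral>\<^sup>+\<omega>. (\<Sum>k. ennreal a * indicator (E k) \<omega>) \<partial>M)"
      unfolding g_def using E(1) by (subst nn_integral_add) (auto simp: emeasure_space_1)
    also have "\<dots> \<le> ennreal (a * R) + ennreal (a * b / (1 - exp (- c)))"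
      using assms E(1) E_geom by (intro add_left_mono nn_integral_suminf_indicator_le) auto
    finally show ?thesis using assms by (simp add: ennreal_plus)
  qed
  ultimately show ?thesis by blast
qed

lemma exponential_tail_all_radii:
  assumes "prob_space M" "P r \<subseteq> space M"
    and large: "1 \<le> r \<Longrightarrow> \<exists>E\<in>sets M. P r \<subseteq> E \<and> measure M E \<le> exp (- r)"
  shows "\<exists>E\<in>sets M. P r \<subseteq> E \<and> measure M E \<le> exp 1 * exp (- 1 * r)"
proof (cases "1 \<le> r")
  case True
  have "exp (- r) \<le> exp 1 * exp (- 1 * r)" by (simp add: mult_exp_exp)
  then show ?thesis using large[OF True] by (meson order_trans)
next
  case False
  have "measure M (space M) \<le> exp 1 * exp (- 1 * r)"
    using False prob_space.prob_space[OF assms(1)] by (simp add: mult_exp_exp)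
  then show ?thesis using assms(2) by blast
qed

lemma dist_round_grid_le:
  fixes c :: "'a::euclidean_space" and \<delta> :: real
  assumes "\<delta> > 0"
  shows "dist c (\<Sum>b\<in>Basis. (\<delta> * of_int (round (inner c b / \<delta>))) *\<^sub>R b) \<le> DIM('a) * \<delta> / 2"
proof -
  define z where "z b = round (inner c b / \<delta>)" for b
  have round_err: "\<bar>inner c b - \<delta> * of_int (z b)\<bar> \<le> \<delta> / 2" for b
  proof -
    have "\<bar>of_int (z b) - inner c b / \<delta>\<bar> \<le> 1 / 2" unfolding z_def by (rule of_int_round_abs_le)
    then have "\<delta> * \<bar>of_int (z b) - inner c b / \<delta>\<bar> \<le> \<delta> / 2" using assms by simp
    moreover have "inner c b - \<delta> * of_int (z b) = \<delta> * (inner c b / \<delta> - of_int (z b))"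
      using assms by (simp add: field_simps)
    ultimately show ?thesis using assms by (simp add: abs_mult abs_minus_commute)
  qed
  have "c - (\<Sum>b\<in>Basis. (\<delta> * of_int (z b)) *\<^sub>R b) = (\<Sum>b\<in>Basis. (inner c b - \<delta> * of_int (z b)) *\<^sub>R b)"
    by (subst (1) euclidean_representation[symmetric, of c])
      (simp add: sum_subtractf[symmetric] scaleR_left_diff_distrib)
  then have "dist c (\<Sum>b\<in>Basis. (\<delta> * of_int (z b)) *\<^sub>R b) = norm (\<Sum>b\<in>Basis. (inner c b - \<delta> * of_int (z b)) *\<^sub>R b)"
    by (simp add: dist_norm)
  also have "\<dots> \<le> (\<Sum>b\<in>Basis. norm ((inner c b - \<delta> * of_int (z b)) *\<^sub>R b))"
    by (rule norm_sum)
  also have "\<dots> \<le> (\<Sum>b\<in>(Basis::'a set). \<delta> / 2)"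
    using round_err by (intro sum_mono) simp
  finally show ?thesis unfolding z_def by simp
qed

lemma abs_round_divide_le:
  fixes y r \<delta> :: real
  assumes "\<delta> > 0" "\<bar>y\<bar> \<le> r"
  shows "\<bar>round (y / \<delta>)\<bar> \<le> int (nat \<lceil>r / \<delta>\<rceil> + 1)"
proof -
  have "\<bar>y / \<delta>\<bar> \<le> r / \<delta>" using assms by (simp add: abs_divide divide_right_mono)
  moreover have "\<bar>of_int (round (y / \<delta>)) - y / \<delta>\<bar> \<le> 1 / 2" by (rule of_int_round_abs_le)
  moreover have "r / \<delta> \<le> real (nat \<lceil>r / \<delta>\<rceil>)" by linarith
  ultimately have "\<bar>real_of_int (round (y / \<delta>))\<bar> \<le> real (nat \<lceil>r / \<delta>\<rceil> + 1)" by linarith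
  then show ?thesis by linarith
qed

lemma finite_net_cball:
  fixes \<rho> r :: real
  assumes "\<rho> > 0" "r \<ge> 0"
  obtains K :: "'a::euclidean_space set"
  where "finite K" "card K \<le> (2 * nat \<lceil>DIM('a) * r / \<rho>\<rceil> + 3) ^ DIM('a)"
    "\<And>c. c \<in> cball 0 r \<Longrightarrow> \<exists>k\<in>K. dist c k \<le> \<rho>" "K \<subseteq> cball 0 (r + \<rho>)"
proof -
  define \<delta> where "\<delta> = \<rho> / DIM('a)"
  define N where "N = nat \<lceil>r / \<delta>\<rceil> + 1"
  have \<delta>: "\<delta> > 0" unfolding \<delta>_def using assms by simp
  define grid :: "('a \<Rightarrow> int) \<Rightarrow> 'a" where "grid z = (\<Sum>b\<in>Basis. (\<delta> * of_int (z b)) *\<^sub>R b)" for z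
  define Z where "Z = (Basis::'a set) \<rightarrow>\<^sub>E {-int N..int N}"
  define K where "K = grid ` Z \<inter> cball 0 (r + \<rho>)"
  have "finite Z" unfolding Z_def by (intro finite_PiE) auto
  then have "finite K" unfolding K_def by simp
  moreover have "card K \<le> (2 * nat \<lceil>DIM('a) * r / \<rho>\<rceil> + 3) ^ DIM('a)"
  proof -
    have "card K \<le> card Z"
      unfolding K_def using \<open>finite Z\<close> by (meson card_image_le card_mono finite_imageI inf_le1 le_trans)
    also have "card Z = (2 * N + 1) ^ DIM('a)"
      unfolding Z_def by (simp add: card_PiE nat_add_distrib nat_mult_distrib)
    also have "2 * N + 1 = 2 * nat \<lceil>DIM('a) * r / \<rho>\<rceil> + 3"
      unfolding N_def \<delta>_def by (simp add: field_simps)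
    finally show ?thesis .
  qed
  moreover have "\<exists>k\<in>K. dist c k \<le> \<rho>" if c: "c \<in> cball 0 r" for c
  proof -
    define z where "z b = round (inner c b / \<delta>)" for b
    have "\<bar>z b\<bar> \<le> int N" if "b \<in> Basis" for b
      unfolding z_def N_def using \<delta> Basis_le_norm[OF that, of c] c by (intro abs_round_divide_le) auto
    then have z: "restrict z Basis \<in> Z" unfolding Z_def by (force simp: abs_le_iff)
    have "grid (restrict z Basis) = (\<Sum>b\<in>Basis. (\<delta> * of_int (round (inner c b / \<delta>))) *\<^sub>R b)"
      unfolding grid_def z_def by (intro sum.cong) auto
    then have d: "dist c (grid (restrict z Basis)) \<le> \<rho> / 2"
      using dist_round_grid_le[OF \<delta>, of c] unfolding \<delta>_def by simp
    then have "norm (grid (restrict z Basis)) \<le> r + \<rho>"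
      using c norm_triangle_ineq2[of "grid (restrict z Basis)" c] assms
      by (simp add: dist_norm norm_minus_commute)
    then have "grid (restrict z Basis) \<in> K" unfolding K_def using z by auto
    with d assms show ?thesis by force
  qed
  moreover have "K \<subseteq> cball 0 (r + \<rho>)" unfolding K_def by simp
  ultimately show thesis by (rule that)
qed

lemma power_nat_ceiling_le_exp:
  fixes x :: real
  assumes "x \<ge> 0"
  shows "real ((2 * nat \<lceil>x\<rceil> + 3) ^ n) \<le> exp (real n * (2 * x + 4))"
proof -
  have "real (2 * nat \<lceil>x\<rceil> + 3) \<le> 1 + (2 * x + 4)" using assms by linarith
  also have "\<dots> \<le> exp (2 * x + 4)" by (rule exp_ge_add_one_self)
  finally have "real (2 * nat \<lceil>x\<rceil> + 3) ^ n \<le> exp (2 * x + 4) ^ n" by (intro power_mono) auto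
  then show ?thesis by (simp add: exp_of_nat_mult)
qed

locale fpp_cylinders =
  fixes M :: "'w measure" and \<mu> :: "real measure"
    and chi :: "'w \<Rightarrow> ('a::euclidean_space \<times> real \<times> real) set"
    and \<rho> r0 :: real
  assumes mu_prob: "prob_space \<mu>" and mu_sets: "sets \<mu> = sets borel"
    and ppp: "poisson_point_process M (fpp_intensity \<mu>) chi"
    and rho_pos: "\<rho> > 0" and radius_large: "4 * \<rho> \<le> r0"
    and radius_mass_pos: "emeasure \<mu> {r0..} > 0"
begin

definition cyl :: "'a \<Rightarrow> real \<Rightarrow> ('a \<times> real \<times> real) set" where
  "cyl w t = cball w \<rho> \<times> ({0..<t} \<times> {r0..})"

definition cyl_union :: "'i set \<Rightarrow> ('i \<Rightarrow> 'a) \<Rightarrow> ('i \<Rightarrow> nat) \<Rightarrow> ('a \<times> real \<times> real) set" where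
  "cyl_union I w l = (\<Union>i\<in>I. cyl (w i) (real (l i)))"

text \<open>Off this event every ball carries a point of
radius \<open>\<ge> r0\<close>, and the times of these points sum to at most \<open>K + card I\<close>.\<close>

definition slow_event :: "'i set \<Rightarrow> ('i \<Rightarrow> 'a) \<Rightarrow> nat \<Rightarrow> 'w set" where
  "slow_event I w K = (\<Union>l\<in>{l \<in> I \<rightarrow>\<^sub>E {0..K}. K \<le> sum l I}.
     {\<omega> \<in> space M. card (chi \<omega> \<inter> cyl_union I w l) = 0})"

definition \<theta> :: real where
  "\<theta> = measure lborel (cball (0::'a) \<rho>) * measure \<mu> {r0..}"

lemma prob_space_M: "prob_space M"
  using ppp unfolding poisson_point_process_def by blast

lemma theta_pos: "\<theta> > 0"
proof -
  interpret prob_space \<mu> by (rule mu_prob)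
  have "measure \<mu> {r0..} > 0"
    using radius_mass_pos by (simp add: emeasure_eq_measure)
  moreover have "measure lborel (cball (0::'a) \<rho>) > 0"
    using rho_pos by (simp add: measure_def emeasure_cball)
  ultimately show ?thesis unfolding \<theta>_def by simp
qed

lemma cyl_in_sets: "cyl w t \<in> sets (fpp_intensity \<mu>)"
  unfolding cyl_def fpp_intensity_def using mu_sets
  by (intro pair_measureI) (auto simp: sets_restrict_space_iff)

lemma emeasure_cyl:
  assumes "t \<ge> 0"
  shows "emeasure (fpp_intensity \<mu>) (cyl w t) = ennreal (\<theta> * t)"
proof -
  interpret prob_space \<mu> by (rule mu_prob)
  let ?L = "restrict_space lborel {0::real..}"
  have "sigma_finite_measure ?L"
    by (intro sigma_finite_measure_restrict_space) (auto simp: lborel.sigma_finite_measure_axioms)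
  then have "sigma_finite_measure (?L \<Otimes>\<^sub>M \<mu>)"
    using prob_space_imp_sigma_finite[OF mu_prob] by (intro sigma_finite_pair_measure)
  moreover have "{0..<t} \<in> sets ?L" "{r0..} \<in> sets \<mu>"
    using mu_sets by (auto simp: sets_restrict_space_iff)
  ultimately have "emeasure (fpp_intensity \<mu>) (cyl w t) =
      emeasure lborel (cball w \<rho>) * (emeasure ?L {0..<t} * emeasure \<mu> {r0..})"
    unfolding fpp_intensity_def cyl_def
    by (simp add: sigma_finite_measure.emeasure_pair_measure_Times emeasure_pair_measure_Times)
  also have "emeasure lborel (cball w \<rho>) = ennreal (measure lborel (cball (0::'a) \<rho>))"
    using rho_pos by (simp add: emeasure_cball measure_def)
  also have "emeasure ?L {0..<t} = ennreal t"
    using assms by (subst emeasure_restrict_space) auto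
  also have "emeasure \<mu> {r0..} = ennreal (measure \<mu> {r0..})"
    by (rule emeasure_eq_measure)
  finally show ?thesis
    using assms by (simp add: \<theta>_def ennreal_mult'[symmetric] mult_ac)
qed

lemma cyl_union_in_sets: "finite I \<Longrightarrow> cyl_union I w l \<in> sets (fpp_intensity \<mu>)"
  unfolding cyl_union_def using cyl_in_sets by auto

lemma emeasure_cyl_union:
  assumes "finite I" and sep: "\<And>i j. i \<in> I \<Longrightarrow> j \<in> I \<Longrightarrow> i \<noteq> j \<Longrightarrow> 2 * \<rho> < dist (w i) (w j)"
  shows "emeasure (fpp_intensity \<mu>) (cyl_union I w l) = ennreal (\<theta> * real (sum l I))"
proof -
  have "cball (w i) \<rho> \<inter> cball (w j) \<rho> = {}" if "i \<in> I" "j \<in> I" "i \<noteq> j" for i j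
  proof -
    have False if "dist (w i) z \<le> \<rho>" "dist (w j) z \<le> \<rho>" for z
      using that sep[OF \<open>i \<in> I\<close> \<open>j \<in> I\<close> \<open>i \<noteq> j\<close>] dist_triangle3[of "w i" "w j" z] by (simp add: dist_commute)
    then show ?thesis by auto
  qed
  then have "disjoint_family_on (\<lambda>i. cyl (w i) (real (l i))) I"
    unfolding disjoint_family_on_def cyl_def by blast
  then have "emeasure (fpp_intensity \<mu>) (cyl_union I w l) =
      (\<Sum>i\<in>I. emeasure (fpp_intensity \<mu>) (cyl (w i) (real (l i))))"
    unfolding cyl_union_def using assms(1) cyl_in_sets by (intro sum_emeasure[symmetric]) auto
  also have "\<dots> = ennreal (\<theta> * real (sum l I))"
    using theta_pos by (simp add: emeasure_cyl sum_distrib_left)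
  finally show ?thesis .
qed

lemma cyl_union_avoided:
  assumes "finite I" and sep: "\<And>i j. i \<in> I \<Longrightarrow> j \<in> I \<Longrightarrow> i \<noteq> j \<Longrightarrow> 2 * \<rho> < dist (w i) (w j)"
  shows "{\<omega> \<in> space M. card (chi \<omega> \<inter> cyl_union I w l) = 0} \<in> sets M"
    and "measure M {\<omega> \<in> space M. card (chi \<omega> \<inter> cyl_union I w l) = 0} = exp (- \<theta> * real (sum l I))"
proof -
  let ?U = "cyl_union I w l"
  have em: "emeasure (fpp_intensity \<mu>) ?U = ennreal (\<theta> * real (sum l I))"
    by (rule emeasure_cyl_union[OF assms])
  then have "measure (fpp_intensity \<mu>) ?U = \<theta> * real (sum l I)"
    using theta_pos by (simp add: measure_def del: of_nat_sum)
  moreover have "(\<lambda>\<omega>. card (chi \<omega> \<inter> ?U)) \<in> measurable M (count_space UNIV)"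
    "\<And>k. measure M {\<omega> \<in> space M. card (chi \<omega> \<inter> ?U) = k}
       = measure (fpp_intensity \<mu>) ?U ^ k / fact k * exp (- measure (fpp_intensity \<mu>) ?U)"
    using ppp cyl_union_in_sets[OF assms(1)] em unfolding poisson_point_process_def by auto
  ultimately show "{\<omega> \<in> space M. card (chi \<omega> \<inter> ?U) = 0} \<in> sets M"
    and "measure M {\<omega> \<in> space M. card (chi \<omega> \<inter> ?U) = 0} = exp (- \<theta> * real (sum l I))"
    by (simp_all add: measurable_count_space_eq2)
qed

lemma slow_event_in_sets:
  assumes "finite I" "\<And>i j. i \<in> I \<Longrightarrow> j \<in> I \<Longrightarrow> i \<noteq> j \<Longrightarrow> 2 * \<rho> < dist (w i) (w j)"
  shows "slow_event I w K \<in> sets M"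
proof -
  have "finite (I \<rightarrow>\<^sub>E {0..K})" using assms(1) by (intro finite_PiE) auto
  then show ?thesis
    unfolding slow_event_def using cyl_union_avoided(1)[OF assms] by (intro sets.finite_UN) auto
qed

lemma measure_slow_event:
  assumes "finite I" "\<And>i j. i \<in> I \<Longrightarrow> j \<in> I \<Longrightarrow> i \<noteq> j \<Longrightarrow> 2 * \<rho> < dist (w i) (w j)"
  shows "measure M (slow_event I w K) \<le> exp (- \<theta> * real K / 2) * (1 / (1 - exp (- \<theta> / 2))) ^ card I"
proof -
  define L where "L = {l \<in> I \<rightarrow>\<^sub>E {0..K}. K \<le> sum l I}"
  define q where "q = exp (- \<theta> / 2)"
  have q: "0 \<le> q" "q < 1" unfolding q_def using theta_pos by auto
  have fin: "finite (I \<rightarrow>\<^sub>E {0..K})" using assms(1) by (intro finite_PiE) auto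
  then have "finite L" unfolding L_def by (rule rev_finite_subset) auto
  have "measure M (slow_event I w K) \<le> (\<Sum>l\<in>L. exp (- \<theta> * real (sum l I)))"
    unfolding slow_event_def L_def[symmetric] using \<open>finite L\<close> cyl_union_avoided[OF assms]
    by (auto intro!: order_trans[OF measure_UNION_le])
  also have "\<dots> \<le> (\<Sum>l\<in>L. exp (- \<theta> * real K / 2) * (\<Prod>i\<in>I. q ^ l i))"
  proof (intro sum_mono)
    fix l assume "l \<in> L"
    then have "real K \<le> real (sum l I)" unfolding L_def by (auto simp del: of_nat_sum)
    then have "\<theta> * real K \<le> \<theta> * real (sum l I)"
      using theta_pos by (intro mult_left_mono) auto
    then have "exp (- \<theta> * real (sum l I)) \<le> exp (- \<theta> * real K / 2) * exp (- \<theta> * real (sum l I) / 2)"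
      by (simp add: mult_exp_exp)
    also have "exp (- \<theta> * real (sum l I) / 2) = (\<Prod>i\<in>I. q ^ l i)"
      unfolding q_def using assms(1)
      by (simp add: exp_sum[symmetric] exp_of_nat_mult[symmetric] sum_distrib_left sum_divide_distrib mult_ac)
    finally show "exp (- \<theta> * real (sum l I)) \<le> exp (- \<theta> * real K / 2) * (\<Prod>i\<in>I. q ^ l i)" .
  qed
  also have "\<dots> \<le> exp (- \<theta> * real K / 2) * (\<Sum>l\<in>I \<rightarrow>\<^sub>E {0..K}. \<Prod>i\<in>I. q ^ l i)"
    unfolding sum_distrib_left using q fin by (intro sum_mono2) (auto simp: L_def prod_nonneg)
  also have "\<dots> \<le> exp (- \<theta> * real K / 2) * (1 / (1 - q)) ^ card I"
    using q assms(1) by (intro mult_left_mono sum_PiE_prod_power_le) auto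
  finally show ?thesis unfolding q_def .
qed

lemma maximal_empty_heights:
  obtains l where "\<And>i. l i \<le> K" "\<And>i. chi \<omega> \<inter> cyl (w i) (real (l i)) = {}"
    "\<And>i. l i < K \<Longrightarrow> chi \<omega> \<inter> cyl (w i) (real (l i) + 1) \<noteq> {}"
proof
  define hit where "hit i j \<longleftrightarrow> chi \<omega> \<inter> cyl (w i) (real j) \<noteq> {}" for i j
  define l where "l i = (LEAST j. j = K \<or> hit i (Suc j))" for i
  show "l i \<le> K" for i unfolding l_def by (rule Least_le) simp
  show "chi \<omega> \<inter> cyl (w i) (real (l i)) = {}" for i
  proof (cases "l i")
    case 0
    then show ?thesis by (simp add: cyl_def)
  next
    case (Suc j)
    then have "\<not> (j = K \<or> hit i (Suc j))"
      using not_less_Least[of j "\<lambda>j. j = K \<or> hit i (Suc j)"] unfolding l_def by simp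
    then show ?thesis using Suc by (simp add: hit_def)
  qed
  show "chi \<omega> \<inter> cyl (w i) (real (l i) + 1) \<noteq> {}" if "l i < K" for i
    using LeastI[of "\<lambda>j. j = K \<or> hit i (Suc j)" K] that unfolding l_def hit_def by (auto simp: add.commute)
qed

lemma cheap_points_if_not_slow:
  assumes "finite I" "\<omega> \<in> space M" "\<omega> \<notin> slow_event I w K"
  obtains c t R where
    "\<And>i. i \<in> I \<Longrightarrow> (c i, t i, R i) \<in> chi \<omega> \<and> c i \<in> cball (w i) \<rho> \<and> 0 \<le> t i \<and> r0 \<le> R i"
    "(\<Sum>i\<in>I. t i) \<le> real K + real (card I)"
proof -
  obtain l where l: "\<And>i. l i \<le> K" "\<And>i. chi \<omega> \<inter> cyl (w i) (real (l i)) = {}"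
    "\<And>i. l i < K \<Longrightarrow> chi \<omega> \<inter> cyl (w i) (real (l i) + 1) \<noteq> {}"
    using maximal_empty_heights[where K = K and \<omega> = \<omega> and w = w] by blast
  have "restrict l I \<in> I \<rightarrow>\<^sub>E {0..K}" using l(1) by auto
  moreover have "chi \<omega> \<inter> cyl_union I w (restrict l I) = {}"
    using l(2) unfolding cyl_union_def by auto
  then have "\<omega> \<in> {\<omega> \<in> space M. card (chi \<omega> \<inter> cyl_union I w (restrict l I)) = 0}"
    using assms(2) by simp
  ultimately have "\<not> K \<le> sum (restrict l I) I"
    using assms(3) unfolding slow_event_def by blast
  then have sum_less: "sum l I < K" by simp
  have "chi \<omega> \<inter> cyl (w i) (real (l i) + 1) \<noteq> {}" if "i \<in> I" for i
    using member_le_sum[of i I l] assms(1) that sum_less by (intro l(3)) simp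
  then obtain p where p: "\<And>i. i \<in> I \<Longrightarrow> p i \<in> chi \<omega> \<inter> cyl (w i) (real (l i) + 1)"
    using bchoice[of I "\<lambda>i p. p \<in> chi \<omega> \<inter> cyl (w i) (real (l i) + 1)"] by blast
  define c where "c i = fst (p i)" for i
  define t where "t i = fst (snd (p i))" for i
  define R where "R i = snd (snd (p i))" for i
  have pts: "(c i, t i, R i) \<in> chi \<omega> \<and> c i \<in> cball (w i) \<rho> \<and> 0 \<le> t i \<and> t i < real (l i) + 1 \<and> r0 \<le> R i"
    if "i \<in> I" for i
    using p[OF that] unfolding c_def t_def R_def cyl_def by auto
  have "(\<Sum>i\<in>I. t i) \<le> (\<Sum>i\<in>I. real (l i) + 1)"
    using pts by (intro sum_mono) (simp add: less_imp_le)
  also have "\<dots> = real (sum l I) + real (card I)" by (simp add: sum.distrib)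
  also have "\<dots> \<le> real K + real (card I)" using sum_less by linarith
  finally show thesis using pts that by blast
qed

text \<open>A chain of points from \<open>0\<close> to \<open>k\<close> with consecutive points at most \<open>2 * \<rho>\<close> apart; points of
equal parity are more than \<open>2 * \<rho>\<close> apart, so the cylinders above them are disjoint.\<close>

definition chain_len :: "'a \<Rightarrow> nat" where
  "chain_len k = max 1 (nat \<lceil>norm k / (2 * \<rho>)\<rceil>)"

definition chain :: "'a \<Rightarrow> nat \<Rightarrow> 'a" where
  "chain k i = (real i / real (chain_len k)) *\<^sub>R k"

definition chain_slow :: "'a \<Rightarrow> nat \<Rightarrow> 'w set" where
  "chain_slow k K = slow_event {i \<in> {..chain_len k}. even i} (chain k) K \<union>
     slow_event {i \<in> {..chain_len k}. odd i} (chain k) K"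

lemma chain_len_pos: "1 \<le> chain_len k"
  by (simp add: chain_len_def)

lemma chain_len_le: "real (chain_len k) \<le> norm k / (2 * \<rho>) + 1"
proof -
  have "0 \<le> norm k / (2 * \<rho>)" using rho_pos by simp
  then show ?thesis unfolding chain_len_def of_nat_max by linarith
qed

lemma dist_chain: "dist (chain k i) (chain k j) = \<bar>real i - real j\<bar> / real (chain_len k) * norm k"
  by (simp add: chain_def dist_norm scaleR_left_diff_distrib[symmetric] diff_divide_distrib[symmetric]
      abs_divide)

lemma dist_chain_Suc_le: "dist (chain k i) (chain k (Suc i)) \<le> 2 * \<rho>"
proof -
  have "norm k / (2 * \<rho>) \<le> real (chain_len k)" unfolding chain_len_def by linarith
  then show ?thesis using rho_pos chain_len_pos[of k] by (simp add: dist_chain field_simps)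
qed

lemma chain_sep:
  assumes "i \<le> chain_len k" "j \<le> chain_len k" "i \<noteq> j" "even i = even j"
  shows "2 * \<rho> < dist (chain k i) (chain k j)"
proof -
  let ?n = "chain_len k"
  have "i + 2 \<le> j \<or> j + 2 \<le> i" using assms(3,4) by presburger
  then have ij: "2 \<le> \<bar>real i - real j\<bar>" and n2: "2 \<le> ?n" using assms(1,2) by auto
  then have "?n = nat \<lceil>norm k / (2 * \<rho>)\<rceil>" unfolding chain_len_def by simp
  then have "real ?n - 1 < norm k / (2 * \<rho>)" using n2 by linarith
  then have "2 * \<rho> * (real ?n - 1) < norm k" using rho_pos by (simp add: field_simps)
  moreover have "\<rho> * real ?n \<le> 2 * \<rho> * (real ?n - 1)"
    using mult_left_mono[of 2 "real ?n" \<rho>] rho_pos n2 by (simp add: algebra_simps)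
  ultimately have "\<rho> * real ?n < norm k" by (rule order_le_less_trans[rotated])
  also have "norm k \<le> \<bar>real i - real j\<bar> / 2 * norm k"
    using mult_right_mono[OF ij, of "norm k"] by simp
  finally show ?thesis using n2 by (simp add: dist_chain field_simps)
qed

lemma chain_slow_in_sets: "chain_slow k K \<in> sets M"
  unfolding chain_slow_def using chain_sep by (intro sets.Un slow_event_in_sets) auto

lemma measure_chain_slow:
  "measure M (chain_slow k K) \<le> 2 * exp (- \<theta> * real K / 2) * (1 / (1 - exp (- \<theta> / 2))) ^ (chain_len k + 1)"
proof -
  let ?q = "1 / (1 - exp (- \<theta> / 2))"
  let ?b = "exp (- \<theta> * real K / 2) * ?q ^ (chain_len k + 1)"
  have q: "1 \<le> ?q" using theta_pos by (simp add: field_simps)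
  have sets: "slow_event {i \<in> {..chain_len k}. P i} (chain k) K \<in> sets M"
    if "P = even \<or> P = odd" for P
    using that chain_sep by (intro slow_event_in_sets) auto
  have bound: "measure M (slow_event {i \<in> {..chain_len k}. P i} (chain k) K) \<le> ?b"
    if "P = even \<or> P = odd" for P
  proof -
    have "card {i \<in> {..chain_len k}. P i} \<le> card {..chain_len k}" by (intro card_mono) auto
    then have "?q ^ card {i \<in> {..chain_len k}. P i} \<le> ?q ^ (chain_len k + 1)"
      using q by (intro power_increasing) auto
    then show ?thesis using that chain_sep
      by (intro order_trans[OF measure_slow_event] mult_left_mono) auto
  qed
  have "measure M (chain_slow k K) \<le> measure M (slow_event {i \<in> {..chain_len k}. even i} (chain k) K)
      + measure M (slow_event {i \<in> {..chain_len k}. odd i} (chain k) K)"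
    unfolding chain_slow_def using sets by (intro measure_Un_le) auto
  also have "\<dots> \<le> ?b + ?b" using bound[of even] bound[of odd] by (intro add_mono) auto
  finally show ?thesis by (simp only: mult_2 distrib_right)
qed

lemma cheap_chain_points:
  assumes "\<omega> \<in> space M" "\<omega> \<notin> chain_slow k K"
  obtains p t R where
    "\<And>i. i \<le> chain_len k \<Longrightarrow> (p i, t i, R i) \<in> chi \<omega> \<and> dist (chain k i) (p i) \<le> \<rho> \<and> 0 \<le> t i \<and> r0 \<le> R i"
    "(\<Sum>i\<le>chain_len k. t i) \<le> 2 * real K + real (chain_len k) + 1"
proof -
  let ?n = "chain_len k"
  define Ev where "Ev = {i \<in> {..?n}. even i}"
  define Od where "Od = {i \<in> {..?n}. odd i}"
  have fin: "finite Ev" "finite Od" unfolding Ev_def Od_def by auto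
  have "\<omega> \<notin> slow_event Ev (chain k) K" "\<omega> \<notin> slow_event Od (chain k) K"
    using assms(2) unfolding chain_slow_def Ev_def Od_def by auto
  obtain ce te Re where
    e: "\<And>i. i \<in> Ev \<Longrightarrow> (ce i, te i, Re i) \<in> chi \<omega> \<and> ce i \<in> cball (chain k i) \<rho> \<and> 0 \<le> te i \<and> r0 \<le> Re i"
    and se: "(\<Sum>i\<in>Ev. te i) \<le> real K + real (card Ev)"
    using cheap_points_if_not_slow[OF fin(1) assms(1) \<open>\<omega> \<notin> slow_event Ev (chain k) K\<close>] by blast
  obtain co to Ro where
    o: "\<And>i. i \<in> Od \<Longrightarrow> (co i, to i, Ro i) \<in> chi \<omega> \<and> co i \<in> cball (chain k i) \<rho> \<and> 0 \<le> to i \<and> r0 \<le> Ro i"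
    and so: "(\<Sum>i\<in>Od. to i) \<le> real K + real (card Od)"
    using cheap_points_if_not_slow[OF fin(2) assms(1) \<open>\<omega> \<notin> slow_event Od (chain k) K\<close>] by blast
  define p where "p i = (if even i then ce i else co i)" for i
  define t where "t i = (if even i then te i else to i)" for i
  define R where "R i = (if even i then Re i else Ro i)" for i
  have split: "{..?n} = Ev \<union> Od" "Ev \<inter> Od = {}" unfolding Ev_def Od_def by auto
  have "(\<Sum>i\<le>?n. t i) = (\<Sum>i\<in>Ev. t i) + (\<Sum>i\<in>Od. t i)"
    unfolding split(1) using fin split(2) by (rule sum.union_disjoint)
  also have "\<dots> = (\<Sum>i\<in>Ev. te i) + (\<Sum>i\<in>Od. to i)"
    unfolding t_def Ev_def Od_def by simp
  finally have "(\<Sum>i\<le>?n. t i) \<le> 2 * real K + real (card Ev + card Od)"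
    using se so by simp
  moreover have "card Ev + card Od = ?n + 1"
    using card_Un_disjoint[OF fin split(2)] split(1)[symmetric] by simp
  ultimately have sum_t: "(\<Sum>i\<le>?n. t i) \<le> 2 * real K + real ?n + 1" by simp
  have "(p i, t i, R i) \<in> chi \<omega> \<and> dist (chain k i) (p i) \<le> \<rho> \<and> 0 \<le> t i \<and> r0 \<le> R i"
    if "i \<le> ?n" for i
    using e[of i] o[of i] that unfolding p_def t_def R_def Ev_def Od_def by auto
  then show thesis using sum_t by (rule that)
qed

lemma T_pt_le_if_not_chain_slow:
  assumes "\<omega> \<in> space M" "\<omega> \<notin> chain_slow k K" "dist c k \<le> \<rho>"
  shows "T_pt (chi \<omega>) (cball 0 \<rho>) c \<le> ennreal (2 * real K + real (chain_len k) + 1)"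
proof -
  let ?n = "chain_len k"
  obtain p t R where
    pts: "\<And>i. i \<le> ?n \<Longrightarrow> (p i, t i, R i) \<in> chi \<omega> \<and> dist (chain k i) (p i) \<le> \<rho> \<and> 0 \<le> t i \<and> r0 \<le> R i"
    and sum_t: "(\<Sum>i\<le>?n. t i) \<le> 2 * real K + real ?n + 1"
    using cheap_chain_points[OF assms(1,2)] by blast
  text \<open>Consecutive stepping stones are within \<open>\<rho> + 2 * \<rho> + \<rho> \<le> r0\<close> of each other.\<close>
  have "p (Suc i) \<in> cball (p i) (R i)" if "i < ?n" for i
  proof -
    have "dist (p i) (p (Suc i)) \<le> dist (chain k i) (p i) + dist (chain k i) (chain k (Suc i))
        + dist (chain k (Suc i)) (p (Suc i))"
      using dist_triangle[of "p i" "p (Suc i)" "chain k i"]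
        dist_triangle[of "chain k i" "p (Suc i)" "chain k (Suc i)"]
      by (simp add: dist_commute)
    then show ?thesis using pts[of i] pts[of "Suc i"] that dist_chain_Suc_le[of k i] radius_large by simp
  qed
  moreover have "c \<in> cball (p ?n) (R ?n)"
  proof -
    have "dist (p ?n) c \<le> dist (chain k ?n) (p ?n) + dist c k"
      using dist_triangle3[of "p ?n" c k] chain_len_pos[of k] by (simp add: chain_def dist_commute)
    then show ?thesis using pts[of ?n] assms(3) radius_large rho_pos by simp
  qed
  moreover have "p 0 \<in> cball 0 \<rho>" using pts[of 0] by (simp add: chain_def)
  ultimately have "T_pt (chi \<omega>) (cball 0 \<rho>) c \<le> ennreal (\<Sum>i\<le>?n. t i)"
    using pts by (intro T_pt_le_sum_times) auto
  also have "\<dots> \<le> ennreal (2 * real K + real ?n + 1)" using sum_t by (rule ennreal_leI)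
  finally show ?thesis .
qed

lemma chain_len_le_radius:
  assumes "norm k \<le> r + \<rho>"
  shows "real (chain_len k) + 1 \<le> r / (2 * \<rho>) + 5 / 2"
proof -
  have "norm k / (2 * \<rho>) \<le> (r + \<rho>) / (2 * \<rho>)"
    using assms rho_pos by (intro divide_right_mono) auto
  then show ?thesis using chain_len_le[of k] rho_pos by (simp add: add_divide_distrib)
qed

lemma T_set_le_if_not_chain_slow:
  assumes "cball 0 \<rho> \<subseteq> A"
    and net: "\<And>c. c \<in> cball 0 r \<Longrightarrow> \<exists>k\<in>net. dist c k \<le> \<rho>" "net \<subseteq> cball 0 (r + \<rho>)"
    and "\<omega> \<in> space M" "\<omega> \<notin> (\<Union>k\<in>net. chain_slow k K)"
  shows "T_set (chi \<omega>) A (cball 0 r) \<le> ennreal (2 * real K + r / (2 * \<rho>) + 3)"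
proof -
  have "T_set (chi \<omega>) A (cball 0 r) \<le> T_set (chi \<omega>) (cball 0 \<rho>) (cball 0 r)"
    using assms(1) by (rule T_set_antimono) simp
  also have "\<dots> \<le> ennreal (2 * real K + r / (2 * \<rho>) + 3)"
    unfolding T_set_def
  proof (rule SUP_least)
    fix c :: 'a assume "c \<in> cball 0 r"
    then obtain k where k: "k \<in> net" "dist c k \<le> \<rho>" using net(1) by blast
    then have "T_pt (chi \<omega>) (cball 0 \<rho>) c \<le> ennreal (2 * real K + real (chain_len k) + 1)"
      using assms(4,5) by (intro T_pt_le_if_not_chain_slow) auto
    also have "\<dots> \<le> ennreal (2 * real K + r / (2 * \<rho>) + 3)"
      using chain_len_le_radius[of k r] k(1) net(2) by (intro ennreal_leI) auto
    finally show "T_pt (chi \<omega>) (cball 0 \<rho>) c \<le> ennreal (2 * real K + r / (2 * \<rho>) + 3)" .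
  qed
  finally show ?thesis .
qed

lemma measure_UN_chain_slow_le:
  assumes "finite net" "net \<subseteq> cball 0 (r + \<rho>)"
  shows "measure M (\<Union>k\<in>net. chain_slow k K) \<le>
    real (card net) * (2 * exp (- \<theta> * real K / 2) * exp ((r / (2 * \<rho>) + 5 / 2) * ln (1 / (1 - exp (- \<theta> / 2)))))"
proof -
  define q where "q = 1 / (1 - exp (- \<theta> / 2))"
  have q: "1 \<le> q" unfolding q_def using theta_pos by (simp add: field_simps)
  have "measure M (\<Union>k\<in>net. chain_slow k K) \<le> (\<Sum>k\<in>net. measure M (chain_slow k K))"
    using assms(1) chain_slow_in_sets by (intro measure_UNION_le) auto
  also have "\<dots> \<le> (\<Sum>k\<in>net. 2 * exp (- \<theta> * real K / 2) * exp ((r / (2 * \<rho>) + 5 / 2) * ln q))"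
  proof (intro sum_mono)
    fix k assume "k \<in> net"
    have "q ^ (chain_len k + 1) = exp (real (chain_len k + 1) * ln q)"
      using q by (subst exp_of_nat_mult) simp
    also have "\<dots> \<le> exp ((r / (2 * \<rho>) + 5 / 2) * ln q)"
      using chain_len_le_radius[of k r] \<open>k \<in> net\<close> assms(2) q by (intro exp_mono mult_right_mono) auto
    finally show "measure M (chain_slow k K) \<le> 2 * exp (- \<theta> * real K / 2) * exp ((r / (2 * \<rho>) + 5 / 2) * ln q)"
      using measure_chain_slow[of k K] unfolding q_def[symmetric]
      by (smt (verit) exp_gt_zero mult_left_mono)
  qed
  finally show ?thesis by (simp add: q_def)
qed

lemma T_set_tail_event:
  assumes "cball 0 \<rho> \<subseteq> A"
  obtains \<alpha> \<beta> where "\<alpha> \<ge> 0" "\<beta> \<ge> 0"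
    "\<And>r K. r \<ge> 0 \<Longrightarrow> \<exists>E\<in>sets M.
       {\<omega> \<in> space M. ennreal (2 * real K + r / (2 * \<rho>) + 3) < T_set (chi \<omega>) A (cball 0 r)} \<subseteq> E \<and>
       measure M E \<le> exp (\<alpha> * r + \<beta> - \<theta> * real K / 2)"
proof -
  define d where "d = real DIM('a)"
  define lq where "lq = ln (1 / (1 - exp (- \<theta> / 2)))"
  have "lq \<ge> 0" unfolding lq_def using theta_pos by (simp add: field_simps)
  define \<alpha> where "\<alpha> = 2 * d ^ 2 / \<rho> + lq / (2 * \<rho>)"
  define \<beta> where "\<beta> = 4 * d + ln 2 + 5 / 2 * lq"
  have "\<alpha> \<ge> 0" "\<beta> \<ge> 0" unfolding \<alpha>_def \<beta>_def d_def using \<open>lq \<ge> 0\<close> rho_pos by auto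
  moreover have "\<exists>E\<in>sets M.
       {\<omega> \<in> space M. ennreal (2 * real K + r / (2 * \<rho>) + 3) < T_set (chi \<omega>) A (cball 0 r)} \<subseteq> E \<and>
       measure M E \<le> exp (\<alpha> * r + \<beta> - \<theta> * real K / 2)" if r: "r \<ge> 0" for r K
  proof -
    obtain net :: "'a set" where net: "finite net"
      "card net \<le> (2 * nat \<lceil>DIM('a) * r / \<rho>\<rceil> + 3) ^ DIM('a)"
      "\<And>c. c \<in> cball 0 r \<Longrightarrow> \<exists>k\<in>net. dist c k \<le> \<rho>" "net \<subseteq> cball 0 (r + \<rho>)"
      using finite_net_cball[OF rho_pos r] by blast
    have "real (card net) \<le> real ((2 * nat \<lceil>DIM('a) * r / \<rho>\<rceil> + 3) ^ DIM('a))"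
      using net(2) by (simp only: of_nat_le_iff)
    also have "\<dots> \<le> exp (d * (2 * (d * r / \<rho>) + 4))"
      unfolding d_def using r rho_pos by (intro power_nat_ceiling_le_exp) simp
    finally have card_net: "real (card net) \<le> exp (d * (2 * (d * r / \<rho>) + 4))" .
    have "measure M (\<Union>k\<in>net. chain_slow k K) \<le>
        real (card net) * (2 * exp (- \<theta> * real K / 2) * exp ((r / (2 * \<rho>) + 5 / 2) * lq))"
      unfolding lq_def by (rule measure_UN_chain_slow_le[OF net(1,4)])
    also have "\<dots> \<le> exp (d * (2 * (d * r / \<rho>) + 4)) * (2 * exp (- \<theta> * real K / 2) * exp ((r / (2 * \<rho>) + 5 / 2) * lq))"
      using card_net by (rule mult_right_mono) simp
    also have "\<dots> = exp (d * (2 * (d * r / \<rho>) + 4) + ln 2 + - \<theta> * real K / 2 + (r / (2 * \<rho>) + 5 / 2) * lq)"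
      by (simp only: exp_add) (simp add: mult_ac)
    also have "\<dots> = exp (\<alpha> * r + \<beta> - \<theta> * real K / 2)"
      unfolding \<alpha>_def \<beta>_def using rho_pos by (intro arg_cong[where f = exp]) (simp add: field_simps power2_eq_square)
    finally have "measure M (\<Union>k\<in>net. chain_slow k K) \<le> exp (\<alpha> * r + \<beta> - \<theta> * real K / 2)" .
    moreover have "(\<Union>k\<in>net. chain_slow k K) \<in> sets M" using net(1) chain_slow_in_sets by auto
    moreover have "{\<omega> \<in> space M. ennreal (2 * real K + r / (2 * \<rho>) + 3) < T_set (chi \<omega>) A (cball 0 r)}
        \<subseteq> (\<Union>k\<in>net. chain_slow k K)"
      using T_set_le_if_not_chain_slow[OF assms net(3,4)] by (blast dest: leD)
    ultimately show ?thesis by blast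
  qed
  ultimately show thesis by (rule that)
qed

lemma T_set_linear_tail:
  assumes "cball 0 \<rho> \<subseteq> A"
  obtains a where "a > 0"
    "\<And>r. 1 \<le> r \<Longrightarrow> \<exists>E\<in>sets M.
       {\<omega> \<in> space M. ennreal (a * r) \<le> T_set (chi \<omega>) A (cball 0 r)} \<subseteq> E \<and> measure M E \<le> exp (- r)"
proof -
  obtain \<alpha> \<beta> where \<alpha>\<beta>: "\<alpha> \<ge> 0" "\<beta> \<ge> 0" and tail: "\<And>r K. r \<ge> 0 \<Longrightarrow> \<exists>E\<in>sets M.
       {\<omega> \<in> space M. ennreal (2 * real K + r / (2 * \<rho>) + 3) < T_set (chi \<omega>) A (cball 0 r)} \<subseteq> E \<and>
       measure M E \<le> exp (\<alpha> * r + \<beta> - \<theta> * real K / 2)"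
    using T_set_tail_event[OF assms] by blast
  text \<open>Choosing \<open>K\<close> linear in \<open>r\<close> makes the exceptional probability \<open>exp (- r)\<close>, while the
    bound on \<open>T_set\<close> stays affine in \<open>r\<close>.\<close>
  define slope where "slope = 4 * (\<alpha> + 1) / \<theta> + 1 / (2 * \<rho>)"
  define offset where "offset = 4 * \<beta> / \<theta> + 5"
  define a where "a = \<bar>slope\<bar> + \<bar>offset\<bar> + 1"
  have "a > 0" unfolding a_def by simp
  moreover have "\<exists>E\<in>sets M. {\<omega> \<in> space M. ennreal (a * r) \<le> T_set (chi \<omega>) A (cball 0 r)} \<subseteq> E \<and>
      measure M E \<le> exp (- r)" if r: "1 \<le> r" for r
  proof -
    define x where "x = 2 * ((\<alpha> + 1) * r + \<beta>) / \<theta>"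
    have "x \<ge> 0" unfolding x_def using \<alpha>\<beta> r theta_pos by auto
    define K where "K = nat \<lceil>x\<rceil>"
    have K: "x \<le> real K" "real K \<le> x + 1" unfolding K_def using \<open>x \<ge> 0\<close> by linarith+
    obtain E where E: "E \<in> sets M"
      "{\<omega> \<in> space M. ennreal (2 * real K + r / (2 * \<rho>) + 3) < T_set (chi \<omega>) A (cball 0 r)} \<subseteq> E"
      "measure M E \<le> exp (\<alpha> * r + \<beta> - \<theta> * real K / 2)"
      using tail[of r K] r by auto
    have "2 * x = 4 * (\<alpha> + 1) / \<theta> * r + 4 * \<beta> / \<theta>"
      unfolding x_def by (simp add: add_divide_distrib algebra_simps)
    moreover have "slope * r = 4 * (\<alpha> + 1) / \<theta> * r + r / (2 * \<rho>)"
      unfolding slope_def by (simp add: algebra_simps)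
    ultimately have "2 * real K + r / (2 * \<rho>) + 3 \<le> slope * r + offset"
      using K(2) unfolding offset_def by linarith
    also have "\<dots> < a * r" unfolding a_def using r by (rule affine_less_linear)
    finally have "ennreal (2 * real K + r / (2 * \<rho>) + 3) < ennreal (a * r)"
      using r \<open>a > 0\<close> by (intro ennreal_lessI) auto
    then have "{\<omega> \<in> space M. ennreal (a * r) \<le> T_set (chi \<omega>) A (cball 0 r)} \<subseteq> E"
      using E(2) by (auto intro: order_less_le_trans)
    moreover have "\<alpha> * r + \<beta> - \<theta> * real K / 2 \<le> - r"
      using K(1) theta_pos unfolding x_def by (simp add: field_simps)
    ultimately show ?thesis using E(1,3) by (meson exp_le_cancel_iff order_trans)
  qed
  ultimately show thesis by (rule that)
qed

lemma T_set_exponential_tail: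
  assumes "cball 0 \<rho> \<subseteq> A"
  obtains a b c where "a > 0" "b > 0" "c > 0"
    "\<And>r. r > 0 \<Longrightarrow> \<exists>E\<in>sets M.
       {\<omega> \<in> space M. ennreal (a * r) \<le> T_set (chi \<omega>) A (cball 0 r)} \<subseteq> E \<and>
       measure M E \<le> b * exp (- c * r)"
proof -
  obtain a where "a > 0" and large: "\<And>r. 1 \<le> r \<Longrightarrow> \<exists>E\<in>sets M.
       {\<omega> \<in> space M. ennreal (a * r) \<le> T_set (chi \<omega>) A (cball 0 r)} \<subseteq> E \<and> measure M E \<le> exp (- r)"
    using T_set_linear_tail[OF assms] by blast
  have "\<exists>E\<in>sets M. {\<omega> \<in> space M. ennreal (a * r) \<le> T_set (chi \<omega>) A (cball 0 r)} \<subseteq> E \<and>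
      measure M E \<le> exp 1 * exp (- 1 * r)" for r
    by (rule exponential_tail_all_radii[where P = "\<lambda>r. {\<omega> \<in> space M.
        ennreal (a * r) \<le> T_set (chi \<omega>) A (cball 0 r)}", OF prob_space_M _ large]) auto
  with \<open>a > 0\<close> show thesis by (intro that[of a "exp 1" 1]) auto
qed

end

lemma expected_T_set_le_affine:
  fixes chi :: "'w \<Rightarrow> ('a::euclidean_space \<times> real \<times> real) set"
  assumes "prob_space M" "a > 0" "b > 0" "c > 0" "\<gamma> > 0"
    and tail: "\<And>r. r > 0 \<Longrightarrow> \<exists>E\<in>sets M.
       {\<omega> \<in> space M. ennreal (a * r) \<le> T_set (chi \<omega>) A (cball 0 r)} \<subseteq> E \<and> measure M E \<le> b * exp (- c * r)"
  shows "\<exists>C D. C > 0 \<and> D > 0 \<and> (\<forall>x::'a. \<exists>g\<in>borel_measurable M.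
    (\<forall>\<omega>\<in>space M. T_set (chi \<omega>) A (cball x \<gamma>) \<le> g \<omega>) \<and> (\<integral>\<^sup>+\<omega>. g \<omega> \<partial>M) \<le> ennreal (C * norm x + D))"
proof (intro exI conjI allI)
  define D where "D = a * \<gamma> + a * b / (1 - exp (- c))"
  show "a > 0" "D > 0" unfolding D_def using assms by (auto intro: add_pos_nonneg)
  fix x :: 'a
  have "cball x \<gamma> \<subseteq> cball 0 (norm x + \<gamma>)"
    by (simp add: cball_subset_cball_iff)
  then have "T_set (chi \<omega>) A (cball x \<gamma>) \<le> T_set (chi \<omega>) A (cball 0 (norm x + \<gamma>))" for \<omega>
    by (intro T_set_antimono) auto
  moreover have "mono (\<lambda>r. T_set (chi \<omega>) A (cball 0 r))" for \<omega>
    by (intro monoI T_set_antimono) auto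
  then obtain g where "g \<in> borel_measurable M"
    "\<forall>\<omega>\<in>space M. T_set (chi \<omega>) A (cball 0 (norm x + \<gamma>)) \<le> g \<omega>"
    "(\<integral>\<^sup>+\<omega>. g \<omega> \<partial>M) \<le> ennreal (a * (norm x + \<gamma>) + a * b / (1 - exp (- c)))"
    using nn_integral_bound_of_exponential_tail[of M a b c "norm x + \<gamma>" "\<lambda>\<omega> r. T_set (chi \<omega>) A (cball 0 r)"]
      assms add_nonneg_pos[OF norm_ge_zero assms(5)] by blast
  moreover have "a * (norm x + \<gamma>) + a * b / (1 - exp (- c)) = a * norm x + D"
    unfolding D_def by (simp add: algebra_simps)
  ultimately show "\<exists>g\<in>borel_measurable M. (\<forall>\<omega>\<in>space M. T_set (chi \<omega>) A (cball x \<gamma>) \<le> g \<omega>) \<and>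
      (\<integral>\<^sup>+\<omega>. g \<omega> \<partial>M) \<le> ennreal (a * norm x + D)"
    by (metis order_trans)
qed

theorem lemmaB3:
  fixes M :: "'w measure" and \<mu> :: "real measure"
    and chi :: "'w \<Rightarrow> ('a::euclidean_space \<times> real \<times> real) set"
    and \<gamma> :: real
  assumes mu_prob: "prob_space \<mu>"
    and mu_sets: "sets \<mu> = sets borel"
    and mu_pos: "emeasure \<mu> {..0} = 0"
    and ppp: "poisson_point_process M (fpp_intensity \<mu>) chi"
    and gamma_pos: "\<gamma> > 0"
  shows "(\<exists>C D. C > 0 \<and> D > 0 \<and>
            (\<forall>x::'a. \<exists>g \<in> borel_measurable M.
               (\<forall>\<omega> \<in> space M. T_set (chi \<omega>) (cball 0 \<gamma>) (cball x \<gamma>) \<le> g \<omega>) \<and>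
               (\<integral>\<^sup>+ \<omega>. g \<omega> \<partial>M) \<le> ennreal (C * norm x + D)))
       \<and> (\<exists>a b c. a > 0 \<and> b > 0 \<and> c > 0 \<and>
            (\<forall>r > 0. \<exists>E \<in> sets M.
               {\<omega> \<in> space M. T_set (chi \<omega>) (cball 0 \<gamma>) (cball 0 r) \<ge> ennreal (a * r)} \<subseteq> E \<and>
               measure M E \<le> b * exp (- c * r)))"
proof -
  obtain r0 where "r0 > 0" "emeasure \<mu> {r0..} > 0"
    using exists_threshold_emeasure_pos[OF mu_prob mu_sets mu_pos] by blast
  define \<rho> where "\<rho> = min \<gamma> (r0 / 4)"
  interpret fpp_cylinders M \<mu> chi \<rho> r0
    using mu_prob mu_sets ppp gamma_pos \<open>r0 > 0\<close> \<open>emeasure \<mu> {r0..} > 0\<close>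
    by (intro fpp_cylinders.intro) (simp_all add: \<rho>_def)
  have "cball 0 \<rho> \<subseteq> cball (0::'a) \<gamma>" unfolding \<rho>_def by auto
  then obtain a b c where abc: "a > 0" "b > 0" "c > 0" and tail: "\<And>r. r > 0 \<Longrightarrow> \<exists>E\<in>sets M.
       {\<omega> \<in> space M. ennreal (a * r) \<le> T_set (chi \<omega>) (cball 0 \<gamma>) (cball 0 r)} \<subseteq> E \<and>
       measure M E \<le> b * exp (- c * r)"
    by (rule T_set_exponential_tail) blast
  show ?thesis
    using expected_T_set_le_affine[OF prob_space_M abc gamma_pos tail] abc tail by blast
qed
end
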